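(* Let $C_1,h>0$ and $\varphi_1(x)=\frac{1}{C_1}\varphi_0(x/h)$. Let $f:\mathbb{R}\to\mathbb{R}$ be convex with $|f'|\le 1/(C_1h)$. Then for every $x\in\mathbb{R}$, $(f\,\square\,\varphi_1)(x)\le f(x)-\frac{C_1}{2}\,|(Df)(x)|^2.$
   Context: $\varphi_0(x)=\frac12x^2$ for $|x|\le1$ and $\varphi_0(x)=|x|-\frac12$ for $|x|>1$; $(f\,\square\,\varphi)(x)=\inf_y\{f(y)+\varphi(x-y)\}$; $f'(x)=\limsup_{s\to0}(f(x+s)-f(x))/s$. For convex $f$, let $x_0$ be a point where $f$ attains its minimum; if no minimum is attained, $x_0=-\infty$ if $f$ is non-decreasing and $x_0=+\infty$ if $f$ is non-increasing. The discrete gradient with step $h$ is $(Df)(x)=f(x)-f(x-h)$ for $x>x_0+h$, $(Df)(x)=f(x)-f(x_0)$ for $x\in[x_0-h,x_0+h]$, $(Df)(x)=f(x)-f(x+h)$ for $x<x_0-h$. *)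

theory Defs
  imports "HOL-Analysis.Analysis"
begin

definition phi0 :: "real \<Rightarrow> real" where
  "phi0 x = (if \<bar>x\<bar> \<le> 1 then x^2 / 2 else \<bar>x\<bar> - 1/2)"

text \<open>Infimal convolution, valued in the extended reals (so it is always defined).\<close>
definition infconv :: "(real \<Rightarrow> real) \<Rightarrow> (real \<Rightarrow> real) \<Rightarrow> real \<Rightarrow> ereal" where
  "infconv f \<phi> x = (INF y. ereal (f y + \<phi> (x - y)))"

definition upper_deriv :: "(real \<Rightarrow> real) \<Rightarrow> real \<Rightarrow> ereal" where
  "upper_deriv f x = Limsup (at (0::real)) (\<lambda>s. ereal ((f (x + s) - f x) / s))"

definition is_x0 :: "(real \<Rightarrow> real) \<Rightarrow> ereal \<Rightarrow> bool" where
  "is_x0 f x0 \<longleftrightarrow>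
     (\<exists>a. x0 = ereal a \<and> (\<forall>y. f a \<le> f y))
   \<or> ((\<nexists>a. \<forall>y. f a \<le> f y) \<and> x0 = -\<infinity> \<and> mono f)
   \<or> ((\<nexists>a. \<forall>y. f a \<le> f y) \<and> x0 = \<infinity> \<and> antimono f)"

definition Dgrad :: "(real \<Rightarrow> real) \<Rightarrow> real \<Rightarrow> ereal \<Rightarrow> real \<Rightarrow> real" where
  "Dgrad f h x0 x =
     (if ereal x > x0 + ereal h then f x - f (x - h)
      else if ereal x < x0 - ereal h then f x - f (x + h)
      else f x - f (real_of_ereal x0))"

end

theory Submission
  imports Defs
begin

text \<open>
  Let \<open>D = (Df)(x)\<close>. By construction of the discrete gradient there is a point \<open>z\<close> with
  \<open>|x - z| \<le> h\<close> and \<open>D = f x - f z \<ge> 0\<close>: one steps from \<open>x\<close> towards the minimum point \<open>x\<^sub>0\<close>,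
  along which a convex function decreases. The derivative bound makes \<open>f\<close> Lipschitz with
  constant \<open>1/(C\<^sub>1h)\<close>, so \<open>s = C\<^sub>1D \<in> [0,1]\<close>. Testing the infimal convolution at
  \<open>y = (1 - s)x + sz\<close> gives \<open>f y \<le> f x - C\<^sub>1D\<^sup>2\<close> by convexity, while \<open>|x - y| \<le> sh \<le> h\<close> puts
  \<open>(x - y)/h\<close> in the quadratic part of \<open>\<phi>\<^sub>0\<close>, so the penalty is at most \<open>C\<^sub>1D\<^sup>2/2\<close>.
\<close>

lemma convex_on_difference_quotient_mono:
  fixes f :: "real \<Rightarrow> real"
  assumes f: "convex_on I f" and I: "x \<in> I" "x + t \<in> I" "x + s \<in> I"
    and "t < s" "t \<noteq> 0" "s \<noteq> 0"
  shows "(f (x + t) - f x) / t \<le> (f (x + s) - f x) / s"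
proof -
  have swap: "(f x - f y) / (x - y) = (f y - f x) / (y - x)" for y
    by (metis minus_diff_eq minus_divide_divide)
  consider "0 < t" | "t < 0" "0 < s" | "s < 0" using assms by linarith
  then show ?thesis
  proof cases
    case 1
    with convex_on_slope_le(1)[OF f I(1,3), of "x + t"] \<open>t < s\<close> show ?thesis
      unfolding swap by simp
  next
    case 2
    with convex_on_slope_le[OF f I(2,3), of x] show ?thesis
      unfolding swap by simp
  next
    case 3
    with convex_on_slope_le(2)[OF f I(2,1), of "x + s"] \<open>t < s\<close> show ?thesis
      unfolding swap by simp
  qed
qed

lemma upper_deriv_le_right_quotient:
  fixes f :: "real \<Rightarrow> real"
  assumes f: "convex_on UNIV f" and "s > 0"
  shows "upper_deriv f x \<le> ereal ((f (x + s) - f x) / s)"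
proof -
  have "\<forall>\<^sub>F t in at 0. ereal ((f (x + t) - f x) / t) \<le> ereal ((f (x + s) - f x) / s)"
    unfolding eventually_at using \<open>s > 0\<close>
    by (intro exI[of _ s]) (auto intro!: convex_on_difference_quotient_mono[OF f] simp: dist_real_def)
  then show ?thesis
    unfolding upper_deriv_def by (rule Limsup_bounded)
qed

lemma left_quotient_le_upper_deriv:
  fixes f :: "real \<Rightarrow> real"
  assumes f: "convex_on UNIV f" and "s < 0"
  shows "ereal ((f (x + s) - f x) / s) \<le> upper_deriv f x"
proof -
  have "\<forall>\<^sub>F t in at 0. ereal ((f (x + s) - f x) / s) \<le> ereal ((f (x + t) - f x) / t)"
    unfolding eventually_at using \<open>s < 0\<close>
    by (intro exI[of _ "- s"]) (auto intro!: convex_on_difference_quotient_mono[OF f] simp: dist_real_def)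
  then have "ereal ((f (x + s) - f x) / s) \<le> Liminf (at 0) (\<lambda>t. ereal ((f (x + t) - f x) / t))"
    by (rule Liminf_bounded)
  also have "\<dots> \<le> upper_deriv f x"
    unfolding upper_deriv_def by (rule Liminf_le_Limsup) simp
  finally show ?thesis .
qed

lemma abs_ereal_le_bounds:
  fixes u :: ereal
  assumes "\<bar>u\<bar> \<le> ereal L"
  shows "ereal (- L) \<le> u" "u \<le> ereal L"
  using assms by (cases u; simp split: if_splits)+

text \<open>For convex \<open>f\<close> the one-sided difference quotients are squeezed by the upper derivative.\<close>
lemma convex_lipschitz_of_upper_deriv_bound:
  fixes f :: "real \<Rightarrow> real"
  assumes f: "convex_on UNIV f" and bound: "\<And>x. \<bar>upper_deriv f x\<bar> \<le> ereal L"
  shows "\<bar>f y - f x\<bar> \<le> L * \<bar>y - x\<bar>"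
proof -
  have "\<bar>f y - f x\<bar> \<le> L * (y - x)" if "x < y" for x y
  proof -
    define q where "q = (f y - f x) / (y - x)"
    have "upper_deriv f x \<le> ereal q"
      using upper_deriv_le_right_quotient[OF f, of "y - x" x] \<open>x < y\<close> by (simp add: q_def)
    with abs_ereal_le_bounds(1)[OF bound] have lower: "- L \<le> q"
      using order_trans ereal_less_eq(3) by metis
    have "q = (f x - f y) / (x - y)"
      unfolding q_def by (metis minus_diff_eq minus_divide_divide)
    then have "ereal q \<le> upper_deriv f y"
      using left_quotient_le_upper_deriv[OF f, of "x - y" y] \<open>x < y\<close> by simp
    with abs_ereal_le_bounds(2)[OF bound] have upper: "q \<le> L"
      using order_trans ereal_less_eq(3) by metis
    from lower upper \<open>x < y\<close> show ?thesis
      by (simp add: q_def abs_le_iff pos_divide_le_eq pos_le_divide_eq)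
  qed
  note ordered = this
  show ?thesis
  proof (cases x y rule: linorder_cases)
    case greater
    then show ?thesis using ordered[of y x] by (simp add: abs_minus_commute)
  qed (use ordered[of x y] in simp_all)
qed

lemma infconv_le_of_convex_combination:
  fixes f \<phi> :: "real \<Rightarrow> real"
  assumes "convex_on UNIV f" and "0 \<le> s" "s \<le> 1"
  shows "infconv f \<phi> x \<le> ereal ((1 - s) * f x + s * f z + \<phi> (s * (x - z)))"
proof -
  let ?y = "(1 - s) * x + s * z"
  have "f ?y \<le> (1 - s) * f x + s * f z"
    using convex_onD[OF assms(1), of s x z] assms(2,3) by simp
  moreover have "x - ?y = s * (x - z)" by (simp add: algebra_simps)
  moreover have "infconv f \<phi> x \<le> ereal (f ?y + \<phi> (x - ?y))"
    unfolding infconv_def by (rule INF_lower) simp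
  ultimately show ?thesis by (simp add: order_trans)
qed

text \<open>The choice \<open>s = C\<^sub>1D\<close> of the interpolation weight balances the gain \<open>sD\<close> against the
  quadratic penalty \<open>s\<^sup>2/(2C\<^sub>1)\<close>.\<close>
lemma infconv_phi0_le_descent:
  fixes f :: "real \<Rightarrow> real"
  assumes f: "convex_on UNIV f" and "C1 > 0" "h > 0"
    and "\<bar>x - z\<bar> \<le> h" and "0 \<le> f x - f z" "f x - f z \<le> 1 / C1"
  shows "infconv f (\<lambda>t. (1 / C1) * phi0 (t / h)) x \<le> ereal (f x - C1 / 2 * (f x - f z)^2)"
proof -
  define D where "D = f x - f z"
  define s where "s = C1 * D"
  have "0 \<le> s" "s \<le> 1"
    using assms by (simp_all add: s_def D_def field_simps)
  have "\<bar>s * (x - z) / h\<bar> = s * (\<bar>x - z\<bar> / h)"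
    using \<open>0 \<le> s\<close> \<open>h > 0\<close> by (simp add: abs_mult)
  also have "\<dots> \<le> s * 1"
    using assms(4) \<open>h > 0\<close> \<open>0 \<le> s\<close> by (intro mult_left_mono) simp_all
  finally have small: "\<bar>s * (x - z) / h\<bar> \<le> s" by simp
  then have "(s * (x - z) / h)^2 \<le> s^2"
    using \<open>0 \<le> s\<close> abs_le_square_iff[of "s * (x - z) / h" s] by simp
  then have "phi0 (s * (x - z) / h) \<le> s^2 / 2"
    using small \<open>s \<le> 1\<close> unfolding phi0_def by simp
  then have "(1 / C1) * phi0 (s * (x - z) / h) \<le> (1 / C1) * (s^2 / 2)"
    using \<open>C1 > 0\<close> by (intro mult_left_mono) simp_all
  also have "\<dots> = C1 * D^2 / 2"
    using \<open>C1 > 0\<close> by (simp add: s_def power2_eq_square)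
  finally have penalty: "(1 / C1) * phi0 (s * (x - z) / h) \<le> C1 * D^2 / 2" .
  have "(1 - s) * f x + s * f z = f x - C1 * D^2"
    by (simp add: s_def D_def power2_eq_square algebra_simps)
  then have "infconv f (\<lambda>t. (1 / C1) * phi0 (t / h)) x
      \<le> ereal (f x - C1 * D^2 + (1 / C1) * phi0 (s * (x - z) / h))"
    using infconv_le_of_convex_combination[OF f \<open>0 \<le> s\<close> \<open>s \<le> 1\<close>,
        of "\<lambda>t. (1 / C1) * phi0 (t / h)" x z] by simp
  also have "\<dots> \<le> ereal (f x - C1 / 2 * D^2)"
    using penalty by (simp add: field_simps)
  finally show ?thesis unfolding D_def .
qed

lemma convex_on_segment_le_endpoint:
  fixes f :: "real \<Rightarrow> real"
  assumes f: "convex_on UNIV f" and "f a \<le> f x" and z: "z \<in> closed_segment a x"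
  shows "f z \<le> f x"
proof -
  have "f z \<le> max (f (min a x)) (f (max a x))"
    using z by (intro convex_on_le_max convex_on_subset[OF f])
      (auto simp: closed_segment_eq_real_ivl min_def max_def split: if_splits)
  with \<open>f a \<le> f x\<close> show ?thesis by (auto simp: min_def max_def split: if_splits)
qed

lemma Dgrad_descent_step:
  fixes f :: "real \<Rightarrow> real"
  assumes f: "convex_on UNIV f" and "h \<ge> 0" and "is_x0 f x0"
  obtains z where "Dgrad f h x0 x = f x - f z" "\<bar>x - z\<bar> \<le> h" "f z \<le> f x"
  using \<open>is_x0 f x0\<close> unfolding is_x0_def
proof (elim disjE conjE exE)
  fix a assume x0: "x0 = ereal a" and min: "\<forall>y. f a \<le> f y"
  consider "a + h < x" | "x < a - h" | "\<bar>x - a\<bar> \<le> h" by linarith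
  then show thesis
  proof cases
    case 1
    then have "Dgrad f h x0 x = f x - f (x - h)"
      by (simp add: Dgrad_def x0)
    moreover have "x - h \<in> closed_segment a x"
      using 1 \<open>h \<ge> 0\<close> by (simp add: closed_segment_eq_real_ivl)
    then have "f (x - h) \<le> f x"
      using convex_on_segment_le_endpoint[OF f min[rule_format]] by blast
    ultimately show thesis
      using \<open>h \<ge> 0\<close> by (intro that[of "x - h"]) simp_all
  next
    case 2
    then have "Dgrad f h x0 x = f x - f (x + h)"
      using \<open>h \<ge> 0\<close> by (simp add: Dgrad_def x0)
    moreover have "x + h \<in> closed_segment a x"
      using 2 \<open>h \<ge> 0\<close> by (simp add: closed_segment_eq_real_ivl)
    then have "f (x + h) \<le> f x"
      using convex_on_segment_le_endpoint[OF f min[rule_format]] by blast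
    ultimately show thesis
      using \<open>h \<ge> 0\<close> by (intro that[of "x + h"]) simp_all
  next
    case 3
    then have "Dgrad f h x0 x = f x - f a"
      by (simp add: Dgrad_def x0 abs_le_iff)
    with 3 min show thesis
      by (intro that[of a]) simp_all
  qed
next
  assume "x0 = - \<infinity>" and "mono f"
  then have "Dgrad f h x0 x = f x - f (x - h)" "f (x - h) \<le> f x"
    using \<open>h \<ge> 0\<close> by (simp_all add: Dgrad_def monoD)
  then show thesis
    using \<open>h \<ge> 0\<close> by (intro that[of "x - h"]) simp_all
next
  assume "x0 = \<infinity>" and "antimono f"
  then have "Dgrad f h x0 x = f x - f (x + h)" "f (x + h) \<le> f x"
    using \<open>h \<ge> 0\<close> by (simp_all add: Dgrad_def antimonoD)
  then show thesis
    using \<open>h \<ge> 0\<close> by (intro that[of "x + h"]) simp_all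
qed

theorem lemma2p3:
  fixes f :: "real \<Rightarrow> real" and C1 h :: real and x0 :: ereal
  assumes "C1 > 0" and "h > 0"
    and "convex_on UNIV f"
    and "\<And>x. \<bar>upper_deriv f x\<bar> \<le> ereal (1 / (C1 * h))"
    and "is_x0 f x0"
  shows "\<forall>x. infconv f (\<lambda>t. (1 / C1) * phi0 (t / h)) x
               \<le> ereal (f x - C1 / 2 * \<bar>Dgrad f h x0 x\<bar>^2)"
proof
  fix x
  obtain z where D: "Dgrad f h x0 x = f x - f z" and near: "\<bar>x - z\<bar> \<le> h" and "f z \<le> f x"
    by (rule Dgrad_descent_step[OF assms(3) less_imp_le[OF assms(2)] assms(5)])
  have "\<bar>f x - f z\<bar> \<le> 1 / (C1 * h) * \<bar>x - z\<bar>"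
    by (rule convex_lipschitz_of_upper_deriv_bound[OF assms(3,4)])
  also have "\<dots> \<le> 1 / (C1 * h) * h"
    using near assms(1,2) by (intro mult_left_mono) auto
  also have "\<dots> = 1 / C1"
    using \<open>h > 0\<close> by simp
  finally have "f x - f z \<le> 1 / C1" by simp
  with infconv_phi0_le_descent[OF assms(3,1,2) near] \<open>f z \<le> f x\<close>
  show "infconv f (\<lambda>t. (1 / C1) * phi0 (t / h)) x \<le> ereal (f x - C1 / 2 * \<bar>Dgrad f h x0 x\<bar>^2)"
    by (simp add: D)
qed

end
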